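(* Let $\alpha,\beta,\gamma,x\in\mathbb{N}_0$ with $(\alpha,\beta,\gamma,x)\neq(0,0,0,0)$, let $\lambda$ be a nonnegative integer and $n$ a nonnegative integer. Then $$A^{\lambda,x}_{n+1}(\alpha,\beta,\gamma)=\gamma\, A^{\lambda,x}_{n}(\alpha,\beta,\gamma+\alpha)+\sum_{k=0}^{n}\binom{n}{k}A^{0,x}_k(\alpha,\beta,\gamma)\,A^{\lambda,x}_{n-k+1}(\alpha,\beta,0).$$
   Context: For a number $t$ and $\alpha$, the generalised factorial is $(t|\alpha)_n=\prod_{j=0}^{n-1}(t-j\alpha)$ for $n\ge 1$ and $(t|\alpha)_0=1$. For parameters $\alpha,\beta,\gamma$, the generalised Stirling numbers $S(n,k,\alpha,\beta,\gamma)$ ($0\le k\le n$) are defined by the polynomial identity $(t|\alpha)_n=\sum_{k=0}^{n}S(n,k,\alpha,\beta,\gamma)\,(t-\gamma|\beta)_k$ in the variable $t$. For a nonnegative integer $\lambda$ put $\binom{k+\lambda-1}{k}=\lambda(\lambda+1)\cdots(\lambda+k-1)/k!$ (equal to $1$ for $k=0$, and for $\lambda=0$ equal to $0$ for $k\ge1$). Define $$A^{\lambda,x}_n(\alpha,\beta,\gamma)=\sum_{k=0}^{n}\binom{k+\lambda-1}{k}(-1)^{n+k}\beta^k k!\,S(n,k,\alpha,-\beta,-\gamma)\,x^k .$$ *)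

theory Defs
  imports Complex_Main
begin

definition gfact :: "real \<Rightarrow> real \<Rightarrow> nat \<Rightarrow> real" where
  "gfact t a n = (\<Prod>j<n. (t - of_nat j * a))"

definition stirS :: "nat \<Rightarrow> nat \<Rightarrow> real \<Rightarrow> real \<Rightarrow> real \<Rightarrow> real" where
  "stirS n k a b g =
     (THE c :: nat \<Rightarrow> real. (\<forall>i>n. c i = 0) \<and>
        (\<forall>t. gfact t a n = (\<Sum>i\<le>n. c i * gfact (t - g) b i))) k"

text \<open>binom(k+lambda-1, k) = lambda(lambda+1)...(lambda+k-1)/k!\<close>
definition multichoose :: "nat \<Rightarrow> nat \<Rightarrow> real" where
  "multichoose lam k = pochhammer (real lam) k / fact k"

definition Apoly :: "nat \<Rightarrow> real \<Rightarrow> nat \<Rightarrow> real \<Rightarrow> real \<Rightarrow> real \<Rightarrow> real" where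
  "Apoly lam x n a b g =
     (\<Sum>k\<le>n. multichoose lam k * (-1) ^ (n + k) * b ^ k * fact k
              * stirS n k a (- b) (- g) * x ^ k)"

end

theory Submission
  imports Defs "HOL-Computational_Algebra.Polynomial"
begin

(* S(n,k,a,b,g) are the coordinates of (t|a)_n in the basis (t-g|b)_k, which is a basis
   because (t-g|b)_k is monic of degree k in t.  Writing the first factor t of
   (t|a)_(n+1) = t (t-a|a)_n as g + (t-g) and expanding (t-a|a)_n = (g + (t-g-a)|a)_n by the
   binomial theorem for generalised factorials gives
     (t|a)_(n+1) = g (t-a|a)_n + sum_j C(n,j) (g|a)_j (t-g|a)_(n-j+1).
   Comparing coordinates yields a recurrence for S(n+1,k,a,b,g).  Replacing b, g by -b, -g,
   attaching the signs (-1)^(n+k) and summing against the weights of A^(lam,x) turns it into the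
   theorem, because A^(0,x)_j = (-1)^j (-g|a)_j.  The identity holds for all real parameters. *)

lemma gfact_0 [simp]: "gfact t a 0 = 1"
  by (simp add: gfact_def)

lemma gfact_Suc: "gfact t a (Suc n) = gfact t a n * (t - of_nat n * a)"
  by (simp add: gfact_def)

lemma gfact_Suc_shift: "gfact t a (Suc n) = t * gfact (t - a) a n"
  unfolding gfact_def prod.lessThan_Suc_shift
  by (simp add: algebra_simps del: prod.lessThan_Suc)

lemma gfact_0_left: "k > 0 \<Longrightarrow> gfact 0 a k = 0"
  unfolding gfact_def by (rule prod_zero) auto

lemma gfact_step_0: "gfact t 0 n = t ^ n"
  by (simp add: gfact_def)

lemma gfact_eq_pochhammer:
  assumes "a \<noteq> 0"
  shows "gfact t a n = (- a) ^ n * pochhammer (- t / a) n"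
proof -
  have "gfact t a n = (\<Prod>j<n. (- a) * (- t / a + of_nat j))"
    unfolding gfact_def using assms by (intro prod.cong) (simp_all add: field_simps)
  also have "\<dots> = (- a) ^ n * pochhammer (- t / a) n"
    by (simp only: prod.distrib prod_constant card_lessThan pochhammer_prod atLeast0LessThan)
  finally show ?thesis .
qed

lemma gfact_add:
  "gfact (x + y) a n = (\<Sum>k\<le>n. of_nat (n choose k) * gfact x a k * gfact y a (n - k))"
proof (cases "a = 0")
  case True
  then show ?thesis
    by (simp add: gfact_step_0 binomial_ring)
next
  case False
  have quotient: "- (x + y) / a = - x / a + - y / a"
    by (simp only: minus_add_distrib add_divide_distrib)
  have power_split: "(- a) ^ n = (- a) ^ k * (- a) ^ (n - k)" if "k \<le> n" for k
    using that by (simp flip: power_add)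
  show ?thesis
    unfolding gfact_eq_pochhammer[OF False] quotient pochhammer_binomial_sum sum_distrib_left
    by (intro sum.cong) (simp_all add: power_split mult_ac)
qed

lemma gfact_Suc_split:
  "gfact t a (Suc n) = g * gfact (t - a) a n
     + (\<Sum>j\<le>n. of_nat (n choose j) * gfact g a j * gfact (t - g) a (n - j + 1))"
proof -
  have "gfact t a (Suc n) = g * gfact (t - a) a n + (t - g) * gfact (g + (t - g - a)) a n"
    by (simp add: gfact_Suc_shift algebra_simps)
  also have "(t - g) * gfact (g + (t - g - a)) a n
      = (\<Sum>j\<le>n. of_nat (n choose j) * gfact g a j * gfact (t - g) a (n - j + 1))"
    unfolding gfact_add sum_distrib_left by (intro sum.cong) (simp_all add: gfact_Suc_shift mult_ac)
  finally show ?thesis .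
qed

definition gfact_poly :: "real \<Rightarrow> nat \<Rightarrow> real poly" where
  "gfact_poly a n = (\<Prod>j<n. [:- of_nat j * a, 1:])"

lemma poly_gfact_poly: "poly (gfact_poly a n) t = gfact t a n"
  by (simp add: gfact_poly_def gfact_def poly_prod)

lemma degree_gfact_poly: "degree (gfact_poly a n) = n"
  unfolding gfact_poly_def by (subst degree_prod_sum_eq) auto

lemma lead_coeff_gfact_poly: "lead_coeff (gfact_poly a n) = 1"
  unfolding gfact_poly_def lead_coeff_prod by simp

lemma gfact_combination_top_coeff:
  assumes "\<And>t. (\<Sum>i\<le>N. c i * gfact t a i) = 0"
  shows "c N = 0"
proof -
  define p where "p = (\<Sum>i\<le>N. smult (c i) (gfact_poly a i))"
  have "p = 0"
    using assms poly_all_0_iff_0[of p] by (simp add: p_def poly_sum poly_gfact_poly)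
  have "coeff p N = (\<Sum>i\<le>N. if i = N then c i else 0)"
    unfolding p_def coeff_sum
  proof (intro sum.cong)
    fix i assume "i \<in> {..N}"
    then show "coeff (smult (c i) (gfact_poly a i)) N = (if i = N then c i else 0)"
      using lead_coeff_gfact_poly[of a N] degree_gfact_poly[of a i] by (auto simp: coeff_eq_0)
  qed simp
  with \<open>p = 0\<close> show ?thesis
    by simp
qed

lemma gfact_combination_eq_0:
  assumes "\<And>t. (\<Sum>i\<le>N. c i * gfact t a i) = 0" and "i \<le> N"
  shows "c i = 0"
  using assms
proof (induction N)
  case 0
  then show ?case
    using gfact_combination_top_coeff[where N = 0] by simp
next
  case (Suc N)
  have "c (Suc N) = 0"
    using Suc.prems(1) by (rule gfact_combination_top_coeff)
  then have "\<And>t. (\<Sum>i\<le>N. c i * gfact t a i) = 0"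
    using Suc.prems(1) by simp
  then show ?case
    using Suc.IH Suc.prems(2) \<open>c (Suc N) = 0\<close> le_Suc_eq by blast
qed

lemma gfact_expansion_exists:
  "\<exists>c. (\<forall>i>n. c i = 0) \<and> (\<forall>t. gfact t a n = (\<Sum>i\<le>n. c i * gfact (t - g) b i))"
proof (induction n)
  case 0
  show ?case
    by (rule exI[of _ "\<lambda>i. if i = 0 then 1 else 0"]) auto
next
  case (Suc n)
  then obtain c where c_0: "\<forall>i>n. c i = 0"
    and c_expansion: "\<forall>t. gfact t a n = (\<Sum>i\<le>n. c i * gfact (t - g) b i)"
    by blast
  define e where "e i = g + of_nat i * b - of_nat n * a" for i
  define d where "d i = (case i of 0 \<Rightarrow> 0 | Suc j \<Rightarrow> c j) + e i * c i" for i
  have "gfact t a (Suc n) = (\<Sum>i\<le>Suc n. d i * gfact (t - g) b i)" for t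
  proof -
    \<comment> \<open>split \<open>t - n a\<close> as \<open>(t - g - i b) + e i\<close>: the first part turns the \<open>i\<close>-th basis element into the next one\<close>
    have "gfact t a (Suc n) = (\<Sum>i\<le>n. c i * gfact (t - g) b i * ((t - g - of_nat i * b) + e i))"
      by (simp add: gfact_Suc c_expansion sum_distrib_right e_def)
    also have "\<dots> = (\<Sum>i\<le>n. c i * gfact (t - g) b (Suc i)) + (\<Sum>i\<le>n. e i * c i * gfact (t - g) b i)"
      unfolding sum.distrib[symmetric] by (intro sum.cong) (simp_all add: gfact_Suc algebra_simps)
    also have "\<dots> = (\<Sum>i\<le>Suc n. (case i of 0 \<Rightarrow> 0 | Suc j \<Rightarrow> c j) * gfact (t - g) b i)
        + (\<Sum>i\<le>Suc n. e i * c i * gfact (t - g) b i)"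
      by (subst (1) sum.atMost_Suc_shift) (simp add: c_0)
    also have "\<dots> = (\<Sum>i\<le>Suc n. d i * gfact (t - g) b i)"
      by (simp add: d_def distrib_right sum.distrib del: sum.atMost_Suc)
    finally show ?thesis .
  qed
  moreover have "\<forall>i>Suc n. d i = 0"
    using c_0 by (auto simp: d_def split: nat.split)
  ultimately show ?case
    by blast
qed

lemma stirS_eqI:
  assumes c_0: "\<And>i. i > n \<Longrightarrow> c i = 0"
    and c_expansion: "\<And>t. gfact t a n = (\<Sum>i\<le>n. c i * gfact (t - g) b i)"
  shows "stirS n k a b g = c k"
proof -
  have "(THE c. (\<forall>i>n. c i = 0) \<and> (\<forall>t. gfact t a n = (\<Sum>i\<le>n. c i * gfact (t - g) b i))) = c"
  proof (rule the_equality)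
    fix d
    assume d: "(\<forall>i>n. d i = 0) \<and> (\<forall>t. gfact t a n = (\<Sum>i\<le>n. d i * gfact (t - g) b i))"
    have "(\<Sum>i\<le>n. (d i - c i) * gfact s b i) = 0" for s
      using d c_expansion[of "s + g"] by (simp add: left_diff_distrib sum_subtractf)
    then have agree: "d i = c i" if "i \<le> n" for i
      using gfact_combination_eq_0[where c = "\<lambda>i. d i - c i" and a = b and N = n] that by simp
    show "d = c"
    proof
      fix i
      show "d i = c i"
        using agree d c_0 by (cases "i \<le> n") auto
    qed
  qed (use assms in auto)
  then show ?thesis
    unfolding stirS_def by simp
qed

lemma
  shows stirS_eq_0: "n < k \<Longrightarrow> stirS n k a b g = 0"
    and gfact_stirS_expansion: "gfact t a n = (\<Sum>i\<le>n. stirS n i a b g * gfact (t - g) b i)"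
proof -
  obtain c where "\<forall>i>n. c i = 0" and "\<forall>t. gfact t a n = (\<Sum>i\<le>n. c i * gfact (t - g) b i)"
    using gfact_expansion_exists by blast
  moreover from this have "stirS n i a b g = c i" for i
    by (intro stirS_eqI) auto
  ultimately show "n < k \<Longrightarrow> stirS n k a b g = 0"
    and "gfact t a n = (\<Sum>i\<le>n. stirS n i a b g * gfact (t - g) b i)"
    by auto
qed

lemma gfact_stirS_expansion_le:
  assumes "n \<le> M"
  shows "gfact t a n = (\<Sum>i\<le>M. stirS n i a b g * gfact (t - g) b i)"
  unfolding gfact_stirS_expansion[of t a n b g]
  using assms by (intro sum.mono_neutral_left) (auto simp: stirS_eq_0)

lemma stirS_n_0: "stirS n 0 a b g = gfact g a n"
proof -
  have "gfact g a n = (\<Sum>i\<le>n. stirS n i a b g * gfact 0 b i)"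
    using gfact_stirS_expansion[of g a n b g] by simp
  also have "\<dots> = stirS n 0 a b g"
    by (subst sum.atMost_shift) (simp add: gfact_0_left)
  finally show ?thesis ..
qed

lemma stirS_Suc:
  "stirS (Suc n) k a b g = g * stirS n k a b (g - a)
     + (\<Sum>j\<le>n. of_nat (n choose j) * gfact g a j * stirS (n - j + 1) k a b 0)"
proof (rule stirS_eqI)
  fix t
  have "gfact t a (Suc n) = g * gfact (t - a) a n
     + (\<Sum>j\<le>n. of_nat (n choose j) * gfact g a j * gfact (t - g) a (n - j + 1))"
    by (rule gfact_Suc_split)
  also have "\<dots> = g * (\<Sum>i\<le>Suc n. stirS n i a b (g - a) * gfact (t - g) b i)
     + (\<Sum>j\<le>n. of_nat (n choose j) * gfact g a j
          * (\<Sum>i\<le>Suc n. stirS (n - j + 1) i a b 0 * gfact (t - g) b i))"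
    using gfact_stirS_expansion_le[of n "Suc n" "t - a" a b "g - a"]
      gfact_stirS_expansion_le[of "n - _ + 1" "Suc n" "t - g" a b 0]
    by simp
  also have "\<dots> = (\<Sum>i\<le>Suc n. (g * stirS n i a b (g - a)
     + (\<Sum>j\<le>n. of_nat (n choose j) * gfact g a j * stirS (n - j + 1) i a b 0)) * gfact (t - g) b i)"
    unfolding distrib_right sum.distrib sum_distrib_left sum_distrib_right
    by (subst (2) sum.swap) (simp add: mult_ac)
  finally show "gfact t a (Suc n) = \<dots>" .
qed (simp add: stirS_eq_0)

definition signed_stirS :: "nat \<Rightarrow> nat \<Rightarrow> real \<Rightarrow> real \<Rightarrow> real \<Rightarrow> real" where
  "signed_stirS n k a b g = (-1) ^ (n + k) * stirS n k a (- b) (- g)"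

lemma signed_stirS_eq_0: "n < k \<Longrightarrow> signed_stirS n k a b g = 0"
  by (simp add: signed_stirS_def stirS_eq_0)

lemma signed_stirS_n_0: "signed_stirS n 0 a b g = (-1) ^ n * gfact (- g) a n"
  by (simp add: signed_stirS_def stirS_n_0)

lemma signed_stirS_Suc:
  "signed_stirS (Suc n) k a b g = g * signed_stirS n k a b (g + a)
     + (\<Sum>j\<le>n. of_nat (n choose j) * signed_stirS j 0 a b g * signed_stirS (n - j + 1) k a b 0)"
proof -
  have sign: "(-1 :: real) ^ j * (-1) ^ (n + k - j) = (-1) ^ (n + k)" if "j \<le> n" for j
    using that by (simp flip: power_add)
  have "signed_stirS (Suc n) k a b g = (-1) ^ (Suc n + k) * (- g * stirS n k a (- b) (- g - a)
     + (\<Sum>j\<le>n. of_nat (n choose j) * gfact (- g) a j * stirS (n - j + 1) k a (- b) 0))"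
    unfolding signed_stirS_def stirS_Suc[of n k a "- b" "- g"] by simp
  also have "\<dots> = g * signed_stirS n k a b (g + a)
     + (\<Sum>j\<le>n. of_nat (n choose j) * signed_stirS j 0 a b g * signed_stirS (n - j + 1) k a b 0)"
    unfolding distrib_left sum_distrib_left signed_stirS_n_0
    by (intro arg_cong2[where f = "(+)"] sum.cong) (simp_all add: signed_stirS_def sign mult_ac)
  finally show ?thesis .
qed

lemma Apoly_eq_sum_signed_stirS:
  assumes "n \<le> M"
  shows "Apoly lam x n a b g
    = (\<Sum>k\<le>M. multichoose lam k * b ^ k * fact k * x ^ k * signed_stirS n k a b g)"
proof -
  have "Apoly lam x n a b g
      = (\<Sum>k\<le>n. multichoose lam k * b ^ k * fact k * x ^ k * signed_stirS n k a b g)"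
    unfolding Apoly_def signed_stirS_def by (intro sum.cong) (simp_all add: mult_ac)
  also have "\<dots> = (\<Sum>k\<le>M. multichoose lam k * b ^ k * fact k * x ^ k * signed_stirS n k a b g)"
    using assms by (intro sum.mono_neutral_left) (auto simp: signed_stirS_eq_0)
  finally show ?thesis .
qed

lemma Apoly_0: "Apoly 0 x n a b g = signed_stirS n 0 a b g"
  unfolding Apoly_eq_sum_signed_stirS[OF order.refl]
  by (subst sum.atMost_shift) (simp add: multichoose_def pochhammer_0_left)

lemma Apoly_Suc:
  "Apoly lam x (Suc n) a b g = g * Apoly lam x n a b (g + a)
     + (\<Sum>k\<le>n. of_nat (n choose k) * Apoly 0 x k a b g * Apoly lam x (n - k + 1) a b 0)"
proof -
  define w where "w k = multichoose lam k * b ^ k * fact k * x ^ k" for k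
  have expand: "Apoly lam x m a b c = (\<Sum>k\<le>Suc n. w k * signed_stirS m k a b c)"
    if "m \<le> Suc n" for m c
    unfolding w_def using that by (rule Apoly_eq_sum_signed_stirS)
  have "Apoly lam x (Suc n) a b g = (\<Sum>k\<le>Suc n. w k * signed_stirS (Suc n) k a b g)"
    by (simp add: expand)
  also have "\<dots> = g * (\<Sum>k\<le>Suc n. w k * signed_stirS n k a b (g + a))
     + (\<Sum>j\<le>n. of_nat (n choose j) * signed_stirS j 0 a b g
          * (\<Sum>k\<le>Suc n. w k * signed_stirS (n - j + 1) k a b 0))"
    unfolding signed_stirS_Suc distrib_left sum.distrib sum_distrib_left
    by (subst (2) sum.swap) (simp add: mult_ac)
  also have "\<dots> = g * Apoly lam x n a b (g + a)
     + (\<Sum>k\<le>n. of_nat (n choose k) * Apoly 0 x k a b g * Apoly lam x (n - k + 1) a b 0)"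
    by (simp add: expand Apoly_0)
  finally show ?thesis .
qed

theorem theorem3:
  fixes a b g x lam n :: nat
  assumes "(a, b, g, x) \<noteq> (0, 0, 0, 0)"
  shows "Apoly lam (real x) (Suc n) (real a) (real b) (real g) =
           real g * Apoly lam (real x) n (real a) (real b) (real g + real a)
         + (\<Sum>k\<le>n. real (n choose k) * Apoly 0 (real x) k (real a) (real b) (real g)
                     * Apoly lam (real x) (n - k + 1) (real a) (real b) 0)"
  by (rule Apoly_Suc)

end
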